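(* Let $L$ be a $\kappa$-frame. The following are equivalent: (1) $L$ is d-reduced; (2) the map $g\colon L\to \mathfrak{H}_\kappa L/\mathfrak{D}_{\mathfrak{H}_\kappa L}$, $a\mapsto[\downarrow a]$ (the composite of $a\mapsto\downarrow a$ with the quotient map) is injective; (3) $L$ is isomorphic to a sub-$\kappa$-frame of some Boolean frame $B$ (a subset closed under finite meets and joins of subsets of cardinality $<\kappa$ computed in $B$) which generates $B$ under arbitrary joins.
   Context: $\kappa$ is a fixed regular cardinal; a $\kappa$-frame is a bounded distributive lattice having joins of all subsets of cardinality $<\kappa$ and satisfying the frame distributive law for such joins; a frame is a complete lattice satisfying the infinite distributive law, and a Boolean frame is a complete Boolean algebra. A $\kappa$-ideal is a downset in which every subset of cardinality $<\kappa$ has an upper bound; $\mathfrak{H}_\kappa L$ is the frame of $\kappa$-ideals under inclusion; $\downarrow a=\{x\mid x\le a\}$. For a $\kappa$-frame (or frame) $M$, $\mathfrak{D}_M=\{(a,b)\mid\forall x\in M:\ a\wedge x=0\iff b\wedge x=0\}$, a congruence (equivalence relation that is a sub-$\kappa$-frame, resp. subframe, of $M\times M$); $M/\mathfrak{D}_M$ is the quotient. $M$ is d-reduced if $\mathfrak{D}_M$ is the diagonal. *)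

theory Defs
  imports Main
begin

(* kappa is represented by a cardinal order relation k (on some type 'k);
   a set S is "of cardinality < kappa" iff |S| <o k. *)
definition small :: "'k rel \<Rightarrow> 'x set \<Rightarrow> bool" where
  "small k S \<longleftrightarrow> (card_of S, k) \<in> ordLess"

definition regular_cardinal :: "'k rel \<Rightarrow> bool" where
  "regular_cardinal k \<longleftrightarrow> Card_order k \<and> Cinfinite k \<and> regularCard k"

definition is_lub_on :: "'b set \<Rightarrow> ('b \<Rightarrow> 'b \<Rightarrow> bool) \<Rightarrow> 'b set \<Rightarrow> 'b \<Rightarrow> bool" where
  "is_lub_on C le T x \<longleftrightarrow> x \<in> C \<and> (\<forall>t\<in>T. le t x) \<and>
      (\<forall>y\<in>C. (\<forall>t\<in>T. le t y) \<longrightarrow> le x y)"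

definition is_glb_on :: "'b set \<Rightarrow> ('b \<Rightarrow> 'b \<Rightarrow> bool) \<Rightarrow> 'b set \<Rightarrow> 'b \<Rightarrow> bool" where
  "is_glb_on C le T x \<longleftrightarrow> x \<in> C \<and> (\<forall>t\<in>T. le x t) \<and>
      (\<forall>y\<in>C. (\<forall>t\<in>T. le y t) \<longrightarrow> le y x)"

definition kappa_frame :: "'k rel \<Rightarrow> 'a::{bounded_lattice,distrib_lattice} itself \<Rightarrow> bool" where
  "kappa_frame k _ \<longleftrightarrow>
     (\<forall>S::'a set. small k S \<longrightarrow> (\<exists>x. is_lub_on UNIV (\<le>) S x)) \<and>
     (\<forall>(a::'a) S x. small k S \<longrightarrow> is_lub_on UNIV (\<le>) S x \<longrightarrow>
         is_lub_on UNIV (\<le>) ((\<lambda>s. inf a s) ` S) (inf a x))"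

definition kappa_ideal :: "'k rel \<Rightarrow> 'a::order set \<Rightarrow> bool" where
  "kappa_ideal k I \<longleftrightarrow> (\<forall>x y. x \<in> I \<longrightarrow> y \<le> x \<longrightarrow> y \<in> I) \<and>
     (\<forall>S. S \<subseteq> I \<longrightarrow> small k S \<longrightarrow> (\<exists>u\<in>I. \<forall>s\<in>S. s \<le> u))"

definition Hk :: "'k rel \<Rightarrow> 'a::order set set" where
  "Hk k = {I. kappa_ideal k I}"

definition Drel :: "'b set \<Rightarrow> ('b \<Rightarrow> 'b \<Rightarrow> 'b) \<Rightarrow> 'b \<Rightarrow> ('b \<times> 'b) set" where
  "Drel C meet z = {(a, b). a \<in> C \<and> b \<in> C \<and>
      (\<forall>x\<in>C. meet a x = z \<longleftrightarrow> meet b x = z)}"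

definition DL :: "('a::{bounded_lattice} \<times> 'a) set" where
  "DL = Drel UNIV inf bot"

definition d_reduced :: "'a::bounded_lattice itself \<Rightarrow> bool" where
  "d_reduced _ \<longleftrightarrow> (DL :: ('a \<times> 'a) set) = Id"

(* D on H_kappa L: meet is intersection, bottom is the ideal {0} = down 0 *)
definition DH :: "'k rel \<Rightarrow> ('a::bounded_lattice set \<times> 'a set) set" where
  "DH k = Drel (Hk k) (\<inter>) {bot}"

definition gmap :: "'k rel \<Rightarrow> 'a::bounded_lattice \<Rightarrow> 'a set set" where
  "gmap k a = DH k `` {{x. x \<le> a}}"

definition boolean_frame :: "'b set \<Rightarrow> ('b \<Rightarrow> 'b \<Rightarrow> bool) \<Rightarrow> bool" where
  "boolean_frame B le \<longleftrightarrow>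
     (\<forall>x\<in>B. le x x) \<and>
     (\<forall>x\<in>B. \<forall>y\<in>B. le x y \<longrightarrow> le y x \<longrightarrow> x = y) \<and>
     (\<forall>x\<in>B. \<forall>y\<in>B. \<forall>z\<in>B. le x y \<longrightarrow> le y z \<longrightarrow> le x z) \<and>
     (\<forall>T\<subseteq>B. \<exists>s. is_lub_on B le T s) \<and>
     (\<forall>a\<in>B. \<forall>T\<subseteq>B. \<forall>s m. is_lub_on B le T s \<longrightarrow> is_glb_on B le {a, s} m \<longrightarrow>
        is_lub_on B le {c. \<exists>t\<in>T. is_glb_on B le {a, t} c} m) \<and>
     (\<forall>a\<in>B. \<exists>c\<in>B. is_glb_on B le {a, c} (THE z. is_lub_on B le {} z) \<and>
                     is_lub_on B le {a, c} (THE z. is_glb_on B le {} z))"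

definition sub_kappa_frame :: "'k rel \<Rightarrow> 'b set \<Rightarrow> ('b \<Rightarrow> 'b \<Rightarrow> bool) \<Rightarrow> 'b set \<Rightarrow> bool" where
  "sub_kappa_frame k B le S \<longleftrightarrow> S \<subseteq> B \<and>
     (\<forall>T\<subseteq>S. finite T \<longrightarrow> (\<forall>x. is_glb_on B le T x \<longrightarrow> x \<in> S)) \<and>
     (\<forall>T\<subseteq>S. small k T \<longrightarrow> (\<forall>x. is_lub_on B le T x \<longrightarrow> x \<in> S))"

definition join_generates :: "'b set \<Rightarrow> ('b \<Rightarrow> 'b \<Rightarrow> bool) \<Rightarrow> 'b set \<Rightarrow> bool" where
  "join_generates B le S \<longleftrightarrow> (\<forall>b\<in>B. \<exists>T\<subseteq>S. is_lub_on B le T b)"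

(* L is isomorphic to a join-generating sub-kappa-frame of the Boolean frame (B, le);
   the isomorphism is an order isomorphism f : L -> S (hence a lattice/kappa-frame iso) *)
definition embeds_in_boolean :: "'k rel \<Rightarrow> 'a::order itself \<Rightarrow> 'b set \<Rightarrow> ('b \<Rightarrow> 'b \<Rightarrow> bool) \<Rightarrow> bool" where
  "embeds_in_boolean k _ B le \<longleftrightarrow> boolean_frame B le \<and>
     (\<exists>S (f::'a \<Rightarrow> 'b). sub_kappa_frame k B le S \<and> join_generates B le S \<and>
        bij_betw f UNIV S \<and> (\<forall>x y. le (f x) (f y) \<longleftrightarrow> x \<le> y))"

end

theory Submission
  imports Defs
begin

text \<open>
  For a bounded lattice \<open>L\<close> put \<open>X\<^sup>\<bottom> = {y. \<forall>x\<in>X. x \<sqinter> y = 0}\<close>. Then \<open>(a, b) \<in> D\<^sub>L\<close> iff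
  \<open>{a}\<^sup>\<bottom> = {b}\<^sup>\<bottom>\<close>, and since \<open>\<down>a \<inter> K = {0}\<close> says \<open>K \<subseteq> {a}\<^sup>\<bottom>\<close> for an ideal \<open>K\<close>,
  the principal ideals \<open>\<down>a\<close>, \<open>\<down>b\<close> are \<open>D\<close>-related in \<open>H\<^sub>\<kappa>L\<close> exactly when \<open>(a, b) \<in> D\<^sub>L\<close>;
  this gives (1) \<open>\<Longleftrightarrow>\<close> (2).

  The sets with \<open>X\<^sup>\<bottom>\<^sup>\<bottom> = X\<close> form a complete Boolean algebra under inclusion, with
  complement \<open>X\<^sup>\<bottom>\<close>. The map \<open>a \<mapsto> {a}\<^sup>\<bottom>\<^sup>\<bottom>\<close> preserves finite meets and, by the
  \<open>\<kappa>\<close>-frame distributive law, joins of fewer than \<open>\<kappa>\<close> elements; its image is join-dense,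
  and it reflects the order exactly when \<open>L\<close> is d-reduced. Conversely, if \<open>L\<close> sits
  join-densely in a Boolean frame and \<open>a \<not>\<le> b\<close>, then \<open>a \<sqinter> \<not>b \<noteq> 0\<close> lies above some nonzero
  \<open>x \<in> L\<close>; this \<open>x \<le> a\<close> is disjoint from \<open>b\<close> but not from \<open>a\<close>, so \<open>(a, b) \<notin> D\<^sub>L\<close>.
\<close>

lemma is_lub_on_unique:
  assumes antisym: "\<forall>x\<in>C. \<forall>y\<in>C. le x y \<longrightarrow> le y x \<longrightarrow> x = y"
    and x: "is_lub_on C le T x" and y: "is_lub_on C le T y"
  shows "x = y"
proof -
  have "x \<in> C" "y \<in> C" "le x y" "le y x"
    using x y unfolding is_lub_on_def by simp_all
  then show ?thesis using antisym by blast
qed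

lemma is_glb_on_unique:
  assumes antisym: "\<forall>x\<in>C. \<forall>y\<in>C. le x y \<longrightarrow> le y x \<longrightarrow> x = y"
    and x: "is_glb_on C le T x" and y: "is_glb_on C le T y"
  shows "x = y"
proof -
  have "x \<in> C" "y \<in> C" "le x y" "le y x"
    using x y unfolding is_glb_on_def by simp_all
  then show ?thesis using antisym by blast
qed

lemma is_glb_on_exists:
  assumes lubs: "\<forall>T\<subseteq>C. \<exists>s. is_lub_on C le T s" and T: "T \<subseteq> C"
  shows "\<exists>m. is_glb_on C le T m"
proof -
  obtain s where s: "is_lub_on C le {y\<in>C. \<forall>t\<in>T. le y t} s"
    using lubs[rule_format, of "{y\<in>C. \<forall>t\<in>T. le y t}"] by blast
  have "is_glb_on C le T s"
    unfolding is_glb_on_def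
  proof (intro conjI ballI impI)
    show "s \<in> C" using s by (simp add: is_lub_on_def)
  next
    fix t assume "t \<in> T"
    then show "le s t" using s T unfolding is_lub_on_def by blast
  next
    fix y assume "y \<in> C" "\<forall>t\<in>T. le y t"
    then show "le y s" using s unfolding is_lub_on_def by blast
  qed
  then show ?thesis ..
qed

lemma equiv_Drel: "equiv C (Drel C meet z)"
  unfolding equiv_def refl_on_def sym_def trans_def Drel_def by auto

lemma small_image: "small k A \<Longrightarrow> small k (f ` A)"
  unfolding small_def using card_of_image ordLeq_ordLess_trans by blast

section \<open>Orthogonal complements\<close>

definition perp :: "'a::bounded_lattice set \<Rightarrow> 'a set" where
  "perp X = {y. \<forall>x\<in>X. inf x y = bot}"

lemma perp_antimono: "X \<subseteq> Y \<Longrightarrow> perp Y \<subseteq> perp X"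
  unfolding perp_def by auto

lemma subset_perp_perp: "X \<subseteq> perp (perp X)"
  unfolding perp_def by (auto simp: inf_commute)

lemma perp_perp_perp [simp]: "perp (perp (perp X)) = perp X"
  by (meson antisym perp_antimono subset_perp_perp)

lemma perp_Union: "perp (\<Union>XX) = \<Inter>(perp ` XX)"
  unfolding perp_def by auto

lemma perp_singleton: "perp {a} = {y. inf a y = bot}"
  unfolding perp_def by simp

lemma bot_in_perp: "bot \<in> perp X"
  unfolding perp_def by simp

lemma Int_perp_subset: "A \<inter> perp A \<subseteq> {bot}"
proof
  fix x assume "x \<in> A \<inter> perp A"
  then have "inf x x = bot" unfolding perp_def by blast
  then show "x \<in> {bot}" by simp
qed

lemma perp_empty: "perp {} = UNIV"
  unfolding perp_def by simp

lemma perp_UNIV: "perp UNIV = {bot}"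
  using Int_perp_subset[of UNIV] bot_in_perp[of UNIV] by blast

lemma perp_eq_Inter_singletons: "perp X = (\<Inter>a\<in>X. perp {a})"
  unfolding perp_def by auto

lemma inf_eq_bot_mono: "inf x y = (bot::'a::bounded_lattice) \<Longrightarrow> x' \<le> x \<Longrightarrow> y' \<le> y \<Longrightarrow> inf x' y' = bot"
  using inf_mono[of x' x y' y] by (simp add: le_bot)

lemma perp_downward_closed: "y \<in> perp X \<Longrightarrow> z \<le> y \<Longrightarrow> z \<in> perp X"
  unfolding perp_def using inf_eq_bot_mono by blast

lemma perp_singleton_antimono: "x \<le> y \<Longrightarrow> perp {y} \<subseteq> perp {x}"
  unfolding perp_singleton using inf_eq_bot_mono by blast

lemma DL_iff_perp_singleton_eq: "(a, b) \<in> DL \<longleftrightarrow> perp {a} = perp {b}"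
  unfolding DL_def Drel_def perp_singleton by auto

lemma d_reduced_iff: "d_reduced TYPE('a::bounded_lattice) \<longleftrightarrow> (\<forall>a b::'a. (a, b) \<in> DL \<longrightarrow> a = b)"
  unfolding d_reduced_def DL_def Drel_def by auto

definition downset :: "'a::order set \<Rightarrow> bool" where
  "downset X \<longleftrightarrow> (\<forall>x\<in>X. \<forall>y\<le>x. y \<in> X)"

lemma downset_perp: "downset (perp X)"
  unfolding downset_def using perp_downward_closed by blast

lemma downset_Union: "\<forall>X\<in>XX. downset X \<Longrightarrow> downset (\<Union>XX)"
  unfolding downset_def by blast

lemma inf_in_perp_of_perp_Int:
  assumes X: "downset X" and Y: "downset Y"
    and w: "w \<in> perp (X \<inter> Y)" and z: "z \<in> perp (perp X)"
  shows "inf z w \<in> perp Y"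
  unfolding perp_def
proof (intro CollectI ballI)
  fix y assume "y \<in> Y"
  have "inf y (inf z w) \<in> perp X"
    unfolding perp_def
  proof (intro CollectI ballI)
    fix x assume "x \<in> X"
    with \<open>y \<in> Y\<close> X Y have "inf x y \<in> X \<inter> Y"
      unfolding downset_def by (meson IntI inf_le1 inf_le2)
    then have "inf (inf x y) w = bot" using w unfolding perp_def by blast
    then show "inf x (inf y (inf z w)) = bot"
      using inf_eq_bot_mono[of "inf x y" w "inf x y" "inf z w"] by (simp add: inf_assoc)
  qed
  then have "inf (inf y (inf z w)) z = bot"
    using z unfolding perp_def[of "perp X"] by blast
  moreover have "inf y (inf z w) \<le> z" by (simp add: le_infI2)
  ultimately show "inf y (inf z w) = bot" by (simp add: inf_absorb1)
qed

lemma perp_perp_Int: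
  assumes X: "downset X" and Y: "downset Y"
  shows "perp (perp X) \<inter> perp (perp Y) = perp (perp (X \<inter> Y))"
proof (rule antisym)
  show "perp (perp X) \<inter> perp (perp Y) \<subseteq> perp (perp (X \<inter> Y))"
  proof
    fix z assume "z \<in> perp (perp X) \<inter> perp (perp Y)"
    then have zX: "z \<in> perp (perp X)" and zY: "z \<in> perp (perp Y)" by simp_all
    show "z \<in> perp (perp (X \<inter> Y))"
      unfolding perp_def[of "perp (X \<inter> Y)"]
    proof (intro CollectI ballI)
      fix w assume "w \<in> perp (X \<inter> Y)"
      then have "inf z w \<in> perp Y" by (rule inf_in_perp_of_perp_Int[OF X Y _ zX])
      then have "inf (inf z w) z = bot" using zY unfolding perp_def by blast
      then show "inf w z = bot" by (simp add: inf_commute inf_left_commute)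
    qed
  qed
  show "perp (perp (X \<inter> Y)) \<subseteq> perp (perp X) \<inter> perp (perp Y)"
    using perp_antimono[OF perp_antimono, of "X \<inter> Y"] by blast
qed

lemma perp_singleton_eq_perp_atMost: "perp {a} = perp {..a}"
proof
  show "perp {..a} \<subseteq> perp {a}" by (rule perp_antimono) simp
  show "perp {a} \<subseteq> perp {..a}"
    unfolding perp_def using inf_eq_bot_mono by fastforce
qed

lemma perp_perp_singleton_inf: "perp (perp {a}) \<inter> perp (perp {b}) = perp (perp {inf a b})"
proof -
  have "downset {..c}" for c :: 'a unfolding downset_def by auto
  moreover have "{..a} \<inter> {..b} = {..inf a b}" by auto
  ultimately show ?thesis
    by (simp add: perp_singleton_eq_perp_atMost perp_perp_Int)
qed

lemma perp_singleton_le_iff_d_reduced: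
  assumes "d_reduced TYPE('a::bounded_lattice)"
  shows "perp {y} \<subseteq> perp {x} \<longleftrightarrow> x \<le> (y::'a)"
proof
  assume yx: "perp {y} \<subseteq> perp {x}"
  have "perp {inf x y} = perp {x}"
  proof (rule set_eqI)
    fix z
    have "z \<in> perp {inf x y} \<longleftrightarrow> inf x z \<in> perp {y}"
      by (simp add: perp_singleton inf_left_commute inf_assoc)
    also have "\<dots> \<longleftrightarrow> z \<in> perp {x}"
      using yx perp_singleton_antimono[of "inf x z" x]
      by (auto simp: perp_singleton)
    finally show "z \<in> perp {inf x y} \<longleftrightarrow> z \<in> perp {x}" .
  qed
  then have "inf x y = x"
    using assms unfolding d_reduced_iff DL_iff_perp_singleton_eq by blast
  then show "x \<le> y" by (metis inf.absorb_iff1)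
qed (rule perp_singleton_antimono)

lemma perp_eq_perp_singleton_lub:
  assumes "is_lub_on UNIV (\<le>) A s"
    and "\<And>y. is_lub_on UNIV (\<le>) ((\<lambda>u. inf y u) ` A) (inf y s)"
  shows "perp A = perp {s}"
proof (rule set_eqI)
  fix y
  have "y \<in> perp A \<longleftrightarrow> (\<forall>u\<in>(\<lambda>u. inf y u) ` A. u \<le> bot)"
    unfolding perp_def by (auto simp: inf_commute bot_unique)
  also have "\<dots> \<longleftrightarrow> inf y s \<le> bot"
    using assms(2)[of y] unfolding is_lub_on_def by (auto intro: order_trans[of _ "inf y s" bot])
  finally show "y \<in> perp A \<longleftrightarrow> y \<in> perp {s}"
    by (simp add: perp_singleton inf_commute bot_unique)
qed

lemma perp_Union_perp_perp_singletons: "perp (\<Union>a\<in>A. perp (perp {a})) = perp A"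
  by (simp add: perp_Union image_image perp_eq_Inter_singletons[of A])

section \<open>The quotient map of principal ideals\<close>

lemma downset_Hk: "I \<in> Hk k \<Longrightarrow> downset I"
  unfolding Hk_def kappa_ideal_def downset_def by blast

lemma atMost_in_Hk: "{..a} \<in> Hk k"
  unfolding Hk_def kappa_ideal_def by (auto intro: order_trans)

lemma atMost_Int_eq_bot_iff:
  assumes "downset K"
  shows "{..a} \<inter> K = {bot} \<longleftrightarrow> bot \<in> K \<and> K \<subseteq> perp {a::'a::bounded_lattice}"
proof
  assume aK: "{..a} \<inter> K = {bot}"
  have "inf a y = bot" if "y \<in> K" for y
  proof -
    have "inf a y \<in> {..a} \<inter> K" using assms that unfolding downset_def by simp
    then show ?thesis using aK by blast
  qed
  then have "K \<subseteq> perp {a}" by (simp add: perp_singleton subset_iff)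
  moreover have "bot \<in> K" using aK by blast
  ultimately show "bot \<in> K \<and> K \<subseteq> perp {a}" by simp
next
  assume K: "bot \<in> K \<and> K \<subseteq> perp {a}"
  have "y = bot" if "y \<le> a" "y \<in> K" for y
  proof -
    have "inf a y = bot" using K that(2) by (auto simp: perp_singleton)
    then show ?thesis using that(1) by (simp add: inf_absorb2)
  qed
  then show "{..a} \<inter> K = {bot}" using K by auto
qed

lemma DH_atMost_iff_DL: "({..a}, {..b}) \<in> DH k \<longleftrightarrow> (a, b) \<in> DL"
proof -
  have "({..a}, {..b}) \<in> DH k \<longleftrightarrow>
      (\<forall>K\<in>Hk k. bot \<in> K \<and> K \<subseteq> perp {a} \<longleftrightarrow> bot \<in> K \<and> K \<subseteq> perp {b})"
    unfolding DH_def Drel_def by (simp add: atMost_in_Hk atMost_Int_eq_bot_iff downset_Hk)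
  also have "\<dots> \<longleftrightarrow> perp {a} = perp {b}"
  proof
    assume K: "\<forall>K\<in>Hk k. bot \<in> K \<and> K \<subseteq> perp {a} \<longleftrightarrow> bot \<in> K \<and> K \<subseteq> perp {b}"
    have down: "{..x} \<subseteq> perp {c} \<longleftrightarrow> x \<in> perp {c}" for x c
      using perp_downward_closed by auto
    have "x \<in> perp {a} \<longleftrightarrow> x \<in> perp {b}" for x
      using K[rule_format, OF atMost_in_Hk, of x] by (simp add: down)
    then show "perp {a} = perp {b}" by blast
  qed simp
  finally show ?thesis by (simp add: DL_iff_perp_singleton_eq)
qed

lemma gmap_eq_iff_DL: "gmap k a = gmap k b \<longleftrightarrow> (a, b) \<in> DL"
proof -
  have gmap: "gmap k c = DH k `` {{..c}}" for c
    by (simp add: gmap_def atMost_def)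
  have "gmap k a = gmap k b \<longleftrightarrow> DH k `` {{..a}} = DH k `` {{..b}}"
    by (simp only: gmap)
  also have "\<dots> \<longleftrightarrow> ({..a}, {..b}) \<in> DH k"
    unfolding DH_def by (rule eq_equiv_class_iff[OF equiv_Drel atMost_in_Hk atMost_in_Hk])
  also have "\<dots> \<longleftrightarrow> (a, b) \<in> DL"
    by (rule DH_atMost_iff_DL)
  finally show ?thesis .
qed

lemma d_reduced_iff_inj_gmap: "d_reduced TYPE('a::bounded_lattice) \<longleftrightarrow> inj (gmap k :: 'a \<Rightarrow> _)"
  unfolding d_reduced_iff inj_def gmap_eq_iff_DL by blast

section \<open>The Boolean frame of regular sets\<close>

definition regular_sets :: "'a::bounded_lattice set set" where
  "regular_sets = {X. perp (perp X) = X}"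

lemma perp_in_regular_sets: "perp X \<in> regular_sets"
  unfolding regular_sets_def by simp

lemma regular_sets_perp_perp: "X \<in> regular_sets \<Longrightarrow> perp (perp X) = X"
  unfolding regular_sets_def by simp

lemma downset_regular_sets: "X \<in> regular_sets \<Longrightarrow> downset X"
  by (metis downset_perp regular_sets_perp_perp)

lemma Inter_in_regular_sets: "TT \<subseteq> regular_sets \<Longrightarrow> \<Inter>TT \<in> regular_sets"
proof -
  assume "TT \<subseteq> regular_sets"
  then have "(\<lambda>X. perp (perp X)) ` TT = (\<lambda>X. X) ` TT"
    by (intro image_cong) (auto simp: regular_sets_perp_perp)
  then have "\<Inter>TT = perp (\<Union>(perp ` TT))"
    by (simp add: perp_Union image_image)
  then show ?thesis by (simp add: perp_in_regular_sets)
qed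

lemma Int_in_regular_sets: "A \<in> regular_sets \<Longrightarrow> B \<in> regular_sets \<Longrightarrow> A \<inter> B \<in> regular_sets"
  using Inter_in_regular_sets[of "{A, B}"] by simp

lemma regular_sets_Int_Sup_distrib:
  assumes A: "A \<in> regular_sets" and TT: "TT \<subseteq> regular_sets"
  shows "A \<inter> perp (perp (\<Union>TT)) = perp (perp (\<Union>t\<in>TT. A \<inter> t))"
proof -
  have "downset (\<Union>TT)"
    using TT downset_regular_sets by (intro downset_Union) blast
  then have "perp (perp A) \<inter> perp (perp (\<Union>TT)) = perp (perp (A \<inter> \<Union>TT))"
    by (rule perp_perp_Int[OF downset_regular_sets[OF A]])
  also have "A \<inter> \<Union>TT = (\<Union>t\<in>TT. A \<inter> t)" by blast
  finally show ?thesis by (simp only: regular_sets_perp_perp[OF A])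
qed

lemma regular_sets_Int_perp:
  assumes "A \<in> regular_sets" shows "A \<inter> perp A = {bot}"
proof -
  have "bot \<in> A" using bot_in_perp[of "perp A"] by (simp add: regular_sets_perp_perp[OF assms])
  then show ?thesis using Int_perp_subset[of A] bot_in_perp[of A] by blast
qed

lemma perp_perp_Un_perp: "perp (perp (A \<union> perp A)) = UNIV"
proof -
  have "perp (A \<union> perp A) = perp A \<inter> perp (perp A)"
    unfolding perp_def by blast
  also have "\<dots> = {bot}"
    by (rule regular_sets_Int_perp[OF perp_in_regular_sets])
  finally show ?thesis unfolding perp_def by simp
qed

text \<open>
  The regular sets ordered by inclusion, with each regular set \<open>X\<close> represented by \<open>{X}\<close>
  so that the elements have the type \<open>'a set set\<close> required of the Boolean frame.
\<close>

definition regular_frame :: "'a::bounded_lattice set set set" where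
  "regular_frame = (\<lambda>X. {X}) ` regular_sets"

definition regular_frame_le :: "'a set set \<Rightarrow> 'a set set \<Rightarrow> bool" where
  "regular_frame_le P Q \<longleftrightarrow> \<Union>P \<subseteq> \<Union>Q"

lemma regular_frameI: "X \<in> regular_sets \<Longrightarrow> {X} \<in> regular_frame"
  unfolding regular_frame_def by blast

lemma regular_frameE: "P \<in> regular_frame \<Longrightarrow> (\<And>X. X \<in> regular_sets \<Longrightarrow> P = {X} \<Longrightarrow> thesis) \<Longrightarrow> thesis"
  unfolding regular_frame_def by blast

lemma Union_in_regular_sets: "P \<in> regular_frame \<Longrightarrow> \<Union>P \<in> regular_sets"
  by (elim regular_frameE) simp

lemma regular_frame_antisym:
  "\<forall>P\<in>regular_frame. \<forall>Q\<in>regular_frame. regular_frame_le P Q \<longrightarrow> regular_frame_le Q P \<longrightarrow> P = Q"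
proof (intro ballI impI)
  fix P Q assume "P \<in> regular_frame" "Q \<in> regular_frame"
    and "regular_frame_le P Q" "regular_frame_le Q P"
  then show "P = Q"
    unfolding regular_frame_le_def by (elim regular_frameE) simp
qed

lemma is_lub_on_regular_frame:
  assumes T: "T \<subseteq> regular_frame"
  shows "is_lub_on regular_frame regular_frame_le T P \<longleftrightarrow> P = {perp (perp (\<Union>(\<Union>T)))}"
proof -
  have lub: "is_lub_on regular_frame regular_frame_le T {perp (perp (\<Union>(\<Union>T)))}"
    unfolding is_lub_on_def regular_frame_le_def
  proof (intro conjI ballI impI)
    show "{perp (perp (\<Union>(\<Union>T)))} \<in> regular_frame"
      by (intro regular_frameI perp_in_regular_sets)
  next
    fix t assume "t \<in> T"
    then show "\<Union>t \<subseteq> \<Union>{perp (perp (\<Union>(\<Union>T)))}"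
      using subset_perp_perp[of "\<Union>(\<Union>T)"] by auto
  next
    fix Q assume Q: "Q \<in> regular_frame" and "\<forall>t\<in>T. \<Union>t \<subseteq> \<Union>Q"
    then have "perp (perp (\<Union>(\<Union>T))) \<subseteq> perp (perp (\<Union>Q))"
      by (intro perp_antimono) blast
    then show "\<Union>{perp (perp (\<Union>(\<Union>T)))} \<subseteq> \<Union>Q"
      using regular_sets_perp_perp[OF Union_in_regular_sets[OF Q]] by simp
  qed
  then show ?thesis
    using is_lub_on_unique[OF regular_frame_antisym] by blast
qed

lemma is_glb_on_regular_frame:
  assumes T: "T \<subseteq> regular_frame"
  shows "is_glb_on regular_frame regular_frame_le T P \<longleftrightarrow> P = {\<Inter>(Union ` T)}"
proof -
  have "Union ` T \<subseteq> regular_sets" using T Union_in_regular_sets by blast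
  then have "is_glb_on regular_frame regular_frame_le T {\<Inter>(Union ` T)}"
    unfolding is_glb_on_def regular_frame_le_def
  proof (intro conjI ballI impI)
    show "{\<Inter>(Union ` T)} \<in> regular_frame"
      by (intro regular_frameI Inter_in_regular_sets) fact
  next
    fix t assume "t \<in> T"
    then show "\<Union>{\<Inter>(Union ` T)} \<subseteq> \<Union>t" by auto
  next
    fix Q assume "\<forall>t\<in>T. \<Union>Q \<subseteq> \<Union>t"
    then show "\<Union>Q \<subseteq> \<Union>{\<Inter>(Union ` T)}" by auto
  qed
  then show ?thesis
    using is_glb_on_unique[OF regular_frame_antisym] by blast
qed

lemma regular_frame_bot: "(THE P. is_lub_on regular_frame regular_frame_le {} P) = {{bot}}"
  by (simp add: is_lub_on_regular_frame perp_empty perp_UNIV)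

lemma regular_frame_top: "(THE P. is_glb_on regular_frame regular_frame_le {} P) = {UNIV}"
  by (simp add: is_glb_on_regular_frame)

lemma regular_frame_Int_Sup_distrib:
  assumes A: "A \<in> regular_frame" and T: "T \<subseteq> regular_frame"
    and S: "is_lub_on regular_frame regular_frame_le T S"
    and M: "is_glb_on regular_frame regular_frame_le {A, S} M"
  shows "is_lub_on regular_frame regular_frame_le
      {C. \<exists>t\<in>T. is_glb_on regular_frame regular_frame_le {A, t} C} M"
proof -
  have "S = {perp (perp (\<Union>(\<Union>T)))}" using S is_lub_on_regular_frame[OF T] by blast
  moreover have "S \<in> regular_frame" using S unfolding is_lub_on_def by blast
  ultimately have M_eq: "M = {\<Union>A \<inter> perp (perp (\<Union>(\<Union>T)))}"
    using M is_glb_on_regular_frame[of "{A, S}"] A by auto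
  have glbs: "{C. \<exists>t\<in>T. is_glb_on regular_frame regular_frame_le {A, t} C} =
      (\<lambda>t. {\<Union>A \<inter> \<Union>t}) ` T"
    using is_glb_on_regular_frame[of "{A, _}"] A T by auto
  have AT: "\<Union>A \<in> regular_sets" "Union ` T \<subseteq> regular_sets"
    using Union_in_regular_sets[OF A] Union_in_regular_sets T by auto
  then have "(\<lambda>t. {\<Union>A \<inter> \<Union>t}) ` T \<subseteq> regular_frame"
    by (auto intro: regular_frameI Int_in_regular_sets)
  moreover have "\<Union>(\<Union>T) = \<Union>(Union ` T)"
    and "\<Union>(\<Union>((\<lambda>t. {\<Union>A \<inter> \<Union>t}) ` T)) = (\<Union>X\<in>Union ` T. \<Union>A \<inter> X)"
    by auto
  ultimately show ?thesis
    unfolding glbs M_eq using regular_sets_Int_Sup_distrib[OF AT]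
    by (simp add: is_lub_on_regular_frame)
qed

lemma regular_frame_complement:
  assumes A: "A \<in> regular_frame"
  shows "\<exists>C\<in>regular_frame. is_glb_on regular_frame regular_frame_le {A, C} {{bot}} \<and>
      is_lub_on regular_frame regular_frame_le {A, C} {UNIV}"
proof -
  have AR: "\<Union>A \<in> regular_sets" using A by (rule Union_in_regular_sets)
  have C: "{perp (\<Union>A)} \<in> regular_frame" by (intro regular_frameI perp_in_regular_sets)
  have "is_glb_on regular_frame regular_frame_le {A, {perp (\<Union>A)}} {{bot}}"
    using A C regular_sets_Int_perp[OF AR] by (simp add: is_glb_on_regular_frame)
  moreover have "is_lub_on regular_frame regular_frame_le {A, {perp (\<Union>A)}} {UNIV}"
    using A C perp_perp_Un_perp[of "\<Union>A"] by (simp add: is_lub_on_regular_frame Un_commute)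
  ultimately show ?thesis using C by blast
qed

lemma boolean_frame_regular_frame: "boolean_frame regular_frame regular_frame_le"
  unfolding boolean_frame_def regular_frame_bot regular_frame_top
proof (intro conjI ballI allI impI)
  fix P :: "'a set set" show "regular_frame_le P P" by (simp add: regular_frame_le_def)
next
  fix P Q :: "'a set set"
  assume "P \<in> regular_frame" "Q \<in> regular_frame" "regular_frame_le P Q" "regular_frame_le Q P"
  then show "P = Q" using regular_frame_antisym by blast
next
  fix P Q R :: "'a set set" assume "regular_frame_le P Q" "regular_frame_le Q R"
  then show "regular_frame_le P R" unfolding regular_frame_le_def by (rule order_trans)
next
  fix T :: "'a set set set" assume "T \<subseteq> regular_frame"
  then show "\<exists>P. is_lub_on regular_frame regular_frame_le T P"
    using is_lub_on_regular_frame by blast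
qed (fact regular_frame_Int_Sup_distrib regular_frame_complement)+

definition regular_of :: "'a::bounded_lattice \<Rightarrow> 'a set set" where
  "regular_of a = {perp (perp {a})}"

lemma range_regular_of: "range regular_of \<subseteq> regular_frame"
  unfolding regular_of_def by (auto intro: regular_frameI perp_in_regular_sets)

lemma regular_of_le_iff:
  assumes "d_reduced TYPE('a::bounded_lattice)"
  shows "regular_frame_le (regular_of x) (regular_of y) \<longleftrightarrow> x \<le> (y::'a)"
proof -
  have "perp (perp {x}) \<subseteq> perp (perp {y}) \<longleftrightarrow> perp {y} \<subseteq> perp {x}"
    by (metis perp_antimono perp_perp_perp)
  then show ?thesis
    unfolding regular_frame_le_def regular_of_def
    by (simp add: perp_singleton_le_iff_d_reduced[OF assms])
qed

lemma finite_Inter_perp_perp_singletons: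
  "finite A \<Longrightarrow> \<exists>c::'a::bounded_lattice. (\<Inter>a\<in>A. perp (perp {a})) = perp (perp {c})"
proof (induction A rule: finite_induct)
  case empty
  have "perp (perp {top::'a}) = UNIV"
    by (simp add: perp_singleton)
  then show ?case by auto
next
  case (insert a A)
  then show ?case by (auto simp: perp_perp_singleton_inf)
qed

lemma sub_kappa_frame_range_regular_of:
  assumes kf: "kappa_frame k TYPE('a::{bounded_lattice,distrib_lattice})"
  shows "sub_kappa_frame k regular_frame regular_frame_le (range (regular_of :: 'a \<Rightarrow> _))"
  unfolding sub_kappa_frame_def
proof (intro conjI allI impI range_regular_of)
  fix T :: "'a set set set" and P
  assume T: "T \<subseteq> range regular_of" "finite T"
    and P: "is_glb_on regular_frame regular_frame_le T P"
  obtain A where "finite A" and T_eq: "T = regular_of ` A"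
    using finite_subset_image[OF T(2) T(1)] by blast
  then obtain c where "(\<Inter>a\<in>A. perp (perp {a})) = perp (perp {c})"
    using finite_Inter_perp_perp_singletons by blast
  moreover have "P = {\<Inter>(Union ` T)}"
    using P is_glb_on_regular_frame[of T P] T(1) range_regular_of by (meson subset_trans)
  ultimately have "P = regular_of c"
    by (simp add: T_eq regular_of_def image_image)
  then show "P \<in> range regular_of" by simp
next
  fix T :: "'a set set set" and P
  assume T: "T \<subseteq> range regular_of" "small k T"
    and P: "is_lub_on regular_frame regular_frame_le T P"
  define A where "A = inv regular_of ` T"
  have T_eq: "T = regular_of ` A"
    unfolding A_def using T(1) by (simp add: image_inv_into_cancel)
  have "small k A" unfolding A_def by (rule small_image[OF T(2)])
  then obtain s where s: "is_lub_on UNIV (\<le>) A s"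
    using kf[unfolded kappa_frame_def, THEN conjunct1, rule_format, of A] by blast
  have "perp A = perp {s}"
    using kf[unfolded kappa_frame_def, THEN conjunct2, rule_format, OF \<open>small k A\<close> s]
    by (rule perp_eq_perp_singleton_lub[OF s])
  moreover have "P = {perp (perp (\<Union>(\<Union>T)))}"
    using P is_lub_on_regular_frame[of T P] T(1) range_regular_of by (meson subset_trans)
  moreover have "\<Union>(\<Union>T) = (\<Union>a\<in>A. perp (perp {a}))"
    unfolding T_eq regular_of_def by auto
  ultimately have "P = regular_of s"
    by (simp add: regular_of_def perp_Union_perp_perp_singletons)
  then show "P \<in> range regular_of" by simp
qed

lemma join_generates_range_regular_of:
  "join_generates regular_frame regular_frame_le (range (regular_of :: 'a::bounded_lattice \<Rightarrow> _))"
  unfolding join_generates_def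
proof
  fix P :: "'a set set" assume "P \<in> regular_frame"
  then obtain X where X: "X \<in> regular_sets" and P: "P = {X}" by (rule regular_frameE)
  have "regular_of ` X \<subseteq> range regular_of" by (rule image_mono) simp
  then have sub: "regular_of ` X \<subseteq> regular_frame" using range_regular_of by (rule subset_trans)
  have "\<Union>(\<Union>(regular_of ` X)) = (\<Union>a\<in>X. perp (perp {a}))"
    unfolding regular_of_def by blast
  then have "perp (perp (\<Union>(\<Union>(regular_of ` X)))) = X"
    by (simp only: perp_Union_perp_perp_singletons regular_sets_perp_perp[OF X])
  then have "is_lub_on regular_frame regular_frame_le (regular_of ` X) P"
    unfolding is_lub_on_regular_frame[OF sub] P by simp
  with \<open>regular_of ` X \<subseteq> range regular_of\<close>
  show "\<exists>T\<subseteq>range regular_of. is_lub_on regular_frame regular_frame_le T P" by blast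
qed

lemma embeds_in_regular_frame:
  assumes "kappa_frame k TYPE('a::{bounded_lattice,distrib_lattice})"
    and "d_reduced TYPE('a)"
  shows "embeds_in_boolean k TYPE('a) (regular_frame :: 'a set set set) regular_frame_le"
proof -
  have ord: "\<forall>x y::'a. regular_frame_le (regular_of x) (regular_of y) \<longleftrightarrow> x \<le> y"
    using regular_of_le_iff[OF assms(2)] by blast
  then have "inj (regular_of :: 'a \<Rightarrow> _)"
    by (intro injI order.antisym) (simp_all add: regular_frame_le_def flip: ord)
  then have "bij_betw regular_of UNIV (range (regular_of :: 'a \<Rightarrow> _))"
    by (simp add: bij_betw_def)
  with ord show ?thesis
    unfolding embeds_in_boolean_def
    by (intro conjI exI[of _ "range regular_of"] exI[of _ regular_of]
        boolean_frame_regular_frame sub_kappa_frame_range_regular_of[OF assms(1)]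
        join_generates_range_regular_of)
qed

section \<open>Join-dense embeddings into Boolean frames\<close>

locale boolean_frame_on =
  fixes B :: "'b set" and le :: "'b \<Rightarrow> 'b \<Rightarrow> bool"
  assumes boolean: "boolean_frame B le"
begin

lemma refl: "x \<in> B \<Longrightarrow> le x x"
  using boolean[unfolded boolean_frame_def, THEN conjunct1] by blast

lemma antisym: "\<forall>x\<in>B. \<forall>y\<in>B. le x y \<longrightarrow> le y x \<longrightarrow> x = y"
  using boolean[unfolded boolean_frame_def, THEN conjunct2, THEN conjunct1] .

lemma trans: "x \<in> B \<Longrightarrow> y \<in> B \<Longrightarrow> z \<in> B \<Longrightarrow> le x y \<Longrightarrow> le y z \<Longrightarrow> le x z"
  using boolean[unfolded boolean_frame_def, THEN conjunct2, THEN conjunct2, THEN conjunct1]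
  by blast

lemma lub_exists: "\<forall>T\<subseteq>B. \<exists>s. is_lub_on B le T s"
  using boolean[unfolded boolean_frame_def, THEN conjunct2, THEN conjunct2, THEN conjunct2,
      THEN conjunct1] .

lemma distrib:
  "a \<in> B \<Longrightarrow> T \<subseteq> B \<Longrightarrow> is_lub_on B le T s \<Longrightarrow> is_glb_on B le {a, s} m \<Longrightarrow>
    is_lub_on B le {c. \<exists>t\<in>T. is_glb_on B le {a, t} c} m"
  using boolean[unfolded boolean_frame_def, THEN conjunct2, THEN conjunct2, THEN conjunct2,
      THEN conjunct2, THEN conjunct1] by blast

definition bottom :: 'b where "bottom = (THE z. is_lub_on B le {} z)"

definition top :: 'b where "top = (THE z. is_glb_on B le {} z)"

lemma is_lub_on_empty_bottom: "is_lub_on B le {} bottom"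
proof -
  obtain z where z: "is_lub_on B le {} z" using lub_exists by blast
  then show ?thesis
    unfolding bottom_def by (rule theI) (rule is_lub_on_unique[OF antisym _ z])
qed

lemma is_glb_on_empty_top: "is_glb_on B le {} top"
proof -
  obtain z where z: "is_glb_on B le {} z" using is_glb_on_exists[OF lub_exists] by blast
  then show ?thesis
    unfolding top_def by (rule theI) (rule is_glb_on_unique[OF antisym _ z])
qed

lemma bottom_in: "bottom \<in> B" and bottom_le: "y \<in> B \<Longrightarrow> le bottom y"
  using is_lub_on_empty_bottom unfolding is_lub_on_def by simp_all

lemma top_in: "top \<in> B" and le_top: "y \<in> B \<Longrightarrow> le y top"
  using is_glb_on_empty_top unfolding is_glb_on_def by simp_all

lemma complement: "a \<in> B \<Longrightarrow> \<exists>c\<in>B. is_glb_on B le {a, c} bottom \<and> is_lub_on B le {a, c} top"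
  using boolean[unfolded boolean_frame_def, THEN conjunct2, THEN conjunct2, THEN conjunct2,
      THEN conjunct2, THEN conjunct2]
  unfolding bottom_def top_def by blast

lemma le_if_glb_complement_le_bottom:
  assumes a: "a \<in> B" and b: "b \<in> B" and c: "c \<in> B"
    and c_top: "is_lub_on B le {b, c} top"
    and m: "is_glb_on B le {a, c} m" and m_bot: "le m bottom"
  shows "le a b"
proof -
  have mB: "m \<in> B" using m unfolding is_glb_on_def by simp
  have "is_glb_on B le {a, top} a"
    using refl le_top a top_in unfolding is_glb_on_def by auto
  then have lub: "is_lub_on B le {x. \<exists>t\<in>{b, c}. is_glb_on B le {a, t} x} a"
    using distrib[OF a _ c_top] b c by blast
  have "le x b" if "\<exists>t\<in>{b, c}. is_glb_on B le {a, t} x" for x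
  proof -
    from that consider "is_glb_on B le {a, b} x" | "is_glb_on B le {a, c} x" by blast
    then show ?thesis
    proof cases
      case 1
      then show ?thesis unfolding is_glb_on_def by simp
    next
      case 2
      then have "x = m" using is_glb_on_unique[OF antisym _ m] by blast
      then show ?thesis using m_bot trans[OF mB bottom_in b] bottom_le[OF b] by simp
    qed
  qed
  then show "le a b" using lub b unfolding is_lub_on_def by blast
qed

lemma join_dense_nonbottom_below:
  assumes dense: "join_generates B le S" and m: "m \<in> B" "\<not> le m bottom"
  shows "\<exists>t\<in>S. le t m \<and> \<not> le t bottom"
proof (rule ccontr)
  assume none: "\<not> (\<exists>t\<in>S. le t m \<and> \<not> le t bottom)"
  obtain T where "T \<subseteq> S" and T: "is_lub_on B le T m"
    using dense m unfolding join_generates_def by blast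
  then have "\<forall>t\<in>T. le t bottom" using none unfolding is_lub_on_def by blast
  then show False using m T bottom_in unfolding is_lub_on_def by blast
qed

lemma le_if_DL_of_join_dense_embedding:
  fixes f :: "'a::bounded_lattice \<Rightarrow> 'b" and a b :: 'a
  assumes f_in: "range f \<subseteq> B" and dense: "join_generates B le (range f)"
    and embedding: "\<And>x y. le (f x) (f y) \<longleftrightarrow> x \<le> y"
    and D: "(a, b) \<in> DL"
  shows "a \<le> b"
proof (rule ccontr)
  assume "\<not> a \<le> b"
  have fB: "f x \<in> B" for x using f_in by blast
  obtain c where c: "c \<in> B" and c_bot: "is_glb_on B le {f b, c} bottom"
    and c_top: "is_lub_on B le {f b, c} top"
    using complement[OF fB] by blast
  obtain m where m: "is_glb_on B le {f a, c} m"
    using is_glb_on_exists[OF lub_exists, of "{f a, c}"] fB c by blast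
  then have mB: "m \<in> B" and m_a: "le m (f a)" and m_c: "le m c"
    unfolding is_glb_on_def by simp_all
  have "\<not> le m bottom"
    using le_if_glb_complement_le_bottom[OF fB fB c c_top m] \<open>\<not> a \<le> b\<close> embedding by blast
  then obtain x where "le (f x) m" and x_pos: "\<not> le (f x) bottom"
    using join_dense_nonbottom_below[OF dense mB] by blast
  then have x_a: "x \<le> a" and x_c: "le (f x) c"
    using trans[OF fB mB fB] trans[OF fB mB c] m_a m_c embedding by blast+
  have "le (f (inf x b)) c"
    using trans[OF fB fB c, of "inf x b" x] x_c embedding by simp
  moreover have "le (f (inf x b)) (f b)" using embedding by simp
  ultimately have xb_bot: "le (f (inf x b)) bottom"
    using c_bot fB unfolding is_glb_on_def by blast
  then have "le (f (inf x b)) (f bot)"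
    using trans[OF fB bottom_in fB] bottom_le[OF fB] by blast
  then have "inf b x = bot" using embedding by (simp add: inf_commute bot_unique)
  then have "inf a x = bot" using D unfolding DL_def Drel_def by simp
  with x_a have "x = bot" by (simp add: inf_absorb2)
  then show False using x_pos xb_bot by simp
qed

lemma d_reduced_if_join_dense_embedding:
  fixes f :: "'a::bounded_lattice \<Rightarrow> 'b"
  assumes "range f \<subseteq> B" and "join_generates B le (range f)"
    and "\<And>x y. le (f x) (f y) \<longleftrightarrow> x \<le> y"
  shows "d_reduced TYPE('a)"
  unfolding d_reduced_iff
proof (intro allI impI)
  fix a b :: 'a assume "(a, b) \<in> DL"
  moreover then have "(b, a) \<in> DL" by (simp add: DL_iff_perp_singleton_eq)
  ultimately show "a = b"
    using le_if_DL_of_join_dense_embedding[OF assms] by (blast intro: order.antisym)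
qed

end

lemma d_reduced_if_embeds_in_boolean:
  assumes "embeds_in_boolean k TYPE('a::bounded_lattice) (B::'b set) le"
  shows "d_reduced TYPE('a)"
proof -
  obtain S and f :: "'a \<Rightarrow> 'b" where "boolean_frame B le" and "sub_kappa_frame k B le S"
    and "join_generates B le S" and "bij_betw f UNIV S"
    and "\<forall>x y. le (f x) (f y) \<longleftrightarrow> x \<le> y"
    using assms unfolding embeds_in_boolean_def by blast
  then show ?thesis
    using boolean_frame_on.d_reduced_if_join_dense_embedding[of B le f]
    unfolding boolean_frame_on_def sub_kappa_frame_def bij_betw_def by auto
qed

theorem mainTheorem14:
  fixes k :: "'k rel"
  assumes "regular_cardinal k"
    and "kappa_frame k TYPE('a::{bounded_lattice,distrib_lattice})"
  shows "(d_reduced TYPE('a) \<longleftrightarrow> inj (gmap k :: 'a \<Rightarrow> 'a set set))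
       \<and> (d_reduced TYPE('a) \<longrightarrow>
            (\<exists>(B::'a set set set) le. embeds_in_boolean k TYPE('a) B le))
       \<and> (\<forall>(B::'b set) le. embeds_in_boolean k TYPE('a) B le \<longrightarrow> d_reduced TYPE('a))"
  using d_reduced_iff_inj_gmap embeds_in_regular_frame[OF assms(2)] d_reduced_if_embeds_in_boolean
  by blast

end
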